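(* Let $a>0$ and let $f:(0,\infty)\to(0,\infty)$ be twice continuously differentiable with $f'(x)>0$ and $f''(x)<0$ for all $x>0$, and $\lim_{x\to\infty}f(x)=\infty$. Suppose $x^*>0$ satisfies $f(x^*+1)\le a$. Then there exists a positive integer $n\ge x^*$ such that $0\le a-f(n)\le f'(x^* )$. *)

theory Defs
  imports Complex_Main
begin

end

theory Submission
  imports Defs
begin

text \<open>Take the largest integer \<open>n \<ge> x\<^sup>*\<close> with \<open>f n \<le> a\<close>; it exists because
  \<open>\<lceil>x\<^sup>*\<rceil>\<close> qualifies (as \<open>f\<close> is increasing and \<open>f (x\<^sup>* + 1) \<le> a\<close>) and \<open>f\<close> tends to
  infinity. Then \<open>a - f n < f (n + 1) - f n = f' \<xi>\<close> for some \<open>\<xi> \<in> (n, n + 1)\<close>, and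
  \<open>f' \<xi> \<le> f' x\<^sup>*\<close> since \<open>f'\<close> is decreasing by concavity.\<close>

lemma unit_increment_le_deriv_of_antimono:
  fixes f f' :: "real \<Rightarrow> real"
  assumes "\<And>x. x > c \<Longrightarrow> (f has_real_derivative f' x) (at x)"
    and "\<And>x y. c < x \<Longrightarrow> x \<le> y \<Longrightarrow> f' y \<le> f' x"
    and "c < x" "x \<le> y"
  shows "f (y + 1) - f y \<le> f' x"
proof -
  obtain z where "y < z" "z < y + 1" "f (y + 1) - f y = (y + 1 - y) * f' z"
    using MVT2[of y "y + 1" f f'] assms(1,3,4) by force
  moreover have "f' z \<le> f' x"
    using assms(2) \<open>c < x\<close> \<open>x \<le> y\<close> \<open>y < z\<close> by simp
  ultimately show ?thesis by simp
qed

lemma obtain_last_nat_below: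
  fixes f :: "real \<Rightarrow> real"
  assumes "filterlim f at_top at_top" "real m \<ge> b" "f (real m) \<le> a"
  obtains n :: nat where "real n \<ge> b" "f (real n) \<le> a" "f (real n + 1) > a"
proof -
  obtain N where N: "\<And>x. x \<ge> N \<Longrightarrow> f x > a"
    using assms(1) by (auto simp: filterlim_at_top_dense eventually_at_top_linorder)
  define S where "S = {n::nat. real n \<ge> b \<and> f (real n) \<le> a}"
  have "S \<subseteq> {..nat \<lceil>N\<rceil>}"
  proof
    fix n assume "n \<in> S"
    then have "\<not> real n \<ge> N" using N by (force simp: S_def)
    then show "n \<in> {..nat \<lceil>N\<rceil>}" by auto linarith
  qed
  then have "finite S" by (rule finite_subset) simp
  moreover have "m \<in> S" using assms(2,3) by (simp add: S_def)
  ultimately have "Max S \<in> S" "Suc (Max S) \<notin> S"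
    by (auto intro: Max_in dest: Max_ge)
  then show ?thesis
    using that[of "Max S"] by (auto simp: S_def add.commute)
qed

theorem lemma6p1:
  fixes f f' f'' :: "real \<Rightarrow> real" and a xs :: real
  assumes a_pos: "a > 0"
    and f_pos: "\<And>x. x > 0 \<Longrightarrow> f x > 0"
    and f_deriv: "\<And>x. x > 0 \<Longrightarrow> (f has_real_derivative f' x) (at x)"
    and f'_deriv: "\<And>x. x > 0 \<Longrightarrow> (f' has_real_derivative f'' x) (at x)"
    and f''_cont: "continuous_on {0<..} f''"
    and f'_pos: "\<And>x. x > 0 \<Longrightarrow> f' x > 0"
    and f''_neg: "\<And>x. x > 0 \<Longrightarrow> f'' x < 0"
    and f_lim: "filterlim f at_top at_top"
    and xs_pos: "xs > 0"
    and xs_bound: "f (xs + 1) \<le> a"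
  shows "\<exists>n::nat. n > 0 \<and> real n \<ge> xs \<and> 0 \<le> a - f (real n) \<and> a - f (real n) \<le> f' xs"
proof -
  have f_mono: "f x \<le> f y" if "0 < x" "x \<le> y" for x y
    by (rule deriv_nonneg_imp_mono[of x y f f']) (use that f_deriv f'_pos in \<open>auto intro: less_imp_le\<close>)
  have f'_antimono: "f' y \<le> f' x" if "0 < x" "x \<le> y" for x y
  proof (rule DERIV_nonpos_imp_nonincreasing[OF \<open>x \<le> y\<close>])
    fix t assume "x \<le> t"
    with \<open>0 < x\<close> show "\<exists>d. (f' has_real_derivative d) (at t) \<and> d \<le> 0"
      using f'_deriv f''_neg by (intro exI[of _ "f'' t"]) (auto intro: less_imp_le)
  qed
  define m where "m = nat \<lceil>xs\<rceil>"
  have "real m \<ge> xs" "real m < xs + 1"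
    using xs_pos by (auto simp: m_def) linarith
  moreover from this have "f (real m) \<le> a"
    using f_mono[of "real m" "xs + 1"] xs_pos xs_bound by linarith
  ultimately obtain n :: nat where n: "real n \<ge> xs" "f (real n) \<le> a" "f (real n + 1) > a"
    using obtain_last_nat_below[OF f_lim] by blast
  have "f (real n + 1) - f (real n) \<le> f' xs"
    using unit_increment_le_deriv_of_antimono[OF f_deriv f'_antimono xs_pos n(1)] by blast
  moreover have "n > 0" using n(1) xs_pos by simp
  ultimately show ?thesis using n by (intro exI[of _ n]) auto
qed

end
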